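(* In the setting described in the context, let $J=(a_1,\ldots,a_j)$ and $\overline{J}=(\overline{a}_1,\ldots,\overline{a}_j)$, $1\leqslant j\leqslant n-1$, be disjoint non-empty ordered subsets of $\{1,\ldots,|L|\}$ of the same size such that $\ell_{\{a_i\}}\cap\ell_{\{\overline{a}_i\}}\cap m$ is a point for all $i$. Suppose $J'$ and $\overline{J}'$ are disjoint ordered $j$-subsets of $\{1,\ldots,|L|\}$ where, for each $i=1,\ldots,j$, the $i$-th element of $J'$ and the $i$-th element of $\overline{J}'$ is each either the $i$-th element of $J$ or the $i$-th element of $\overline{J}$. Then $z_{J,\overline{J},m}=z_{J',\overline{J}',m}$.
   Context: Let ${\mathbb K}$ be a field, $n\geqslant 2$, and consider $\mathrm{PG}_n({\mathbb K})$. For two non-intersecting subspaces $x,y$, $x\oplus y$ denotes their span. Fix points $x_0,\ldots,x_n$ in general position and put $\Sigma_i=x_0\oplus\cdots\oplus x_i$, $\pi_i=x_1\oplus\cdots\oplus x_i$. For $i=3,\ldots,n$ let $y_i$ be a point on the line $x_{i-1}\oplus x_i$ different from $x_{i-1}$ and $x_i$. Let $L$ be a finite set of lines of the plane $\Sigma_2$ meeting the line $\pi_2$ in pairwise distinct points, all different from $x_2$, labelled $\ell_{\{1\}},\ldots,\ell_{\{|L|\}}$. An ordered subset of $\{1,\ldots,|L|\}$ is a sequence of distinct elements; for $|J|\geqslant2$ write $J=(\ldots,b,a)$ ($a$ last, $b$ second-to-last) and let $J\setminus\{a\}$, $J\setminus\{b\}$ be obtained by deleting $a$, resp. $b$, keeping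 the order. Let $m$ be a line of $\Sigma_2$ through $x_2$, different from $\pi_2$. If $\ell_{\{i\}}$ and $\ell_{\{j\}}$ meet on $m$, put $z_{\{i\},\{j\},m}=\ell_{\{i\}}\cap\ell_{\{j\}}\cap m$. For disjoint ordered subsets $J=(a_1,\ldots,a_j)$, $\overline{J}=(\overline{a}_1,\ldots,\overline{a}_j)$ with $\ell_{\{a_i\}}\cap\ell_{\{\overline{a}_i\}}\cap m$ a point for all $i$, and $j\geqslant 2$, define recursively $z_{J,\overline{J},m}=(x_{|J|+1}\oplus z_{J\setminus\{a\},\overline{J}\setminus\{\overline{a}\},m})\cap(y_{|J|+1}\oplus z_{J\setminus\{b\},\overline{J}\setminus\{\overline{b}\},m})$, where $J=(\ldots,b,a)$ and $\overline{J}=(\ldots,\overline{b},\overline{a})$. *)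

theory Defs
  imports "HOL-Analysis.Analysis"
begin

text \<open>Projective space PG_n(K) is modelled by the vector space K^{n+1} = 'a^'n with
  CARD('n) = n + 1; projective subspaces are linear subspaces (sets of vectors).\<close>

definition psub :: "('a::field ^ 'n) set \<Rightarrow> bool" where
  "psub S \<longleftrightarrow> vec.subspace S"

definition ppoint :: "('a::field ^ 'n) set \<Rightarrow> bool" where
  "ppoint S \<longleftrightarrow> vec.subspace S \<and> vec.dim S = 1"

definition pline :: "('a::field ^ 'n) set \<Rightarrow> bool" where
  "pline S \<longleftrightarrow> vec.subspace S \<and> vec.dim S = 2"

definition pjoin :: "('a::field ^ 'n) set \<Rightarrow> ('a ^ 'n) set \<Rightarrow> ('a ^ 'n) set" where
  "pjoin S T = vec.span (S \<union> T)"

definition gen_pos :: "nat \<Rightarrow> (nat \<Rightarrow> ('a::field ^ 'n) set) \<Rightarrow> bool" where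
  "gen_pos n x \<longleftrightarrow> (\<forall>i\<le>n. ppoint (x i)) \<and>
     (\<forall>I \<subseteq> {0..n}. vec.dim (vec.span (\<Union>i\<in>I. x i)) = card I)"

definition Sigma_sp :: "(nat \<Rightarrow> ('a::field ^ 'n) set) \<Rightarrow> nat \<Rightarrow> ('a ^ 'n) set" where
  "Sigma_sp x i = vec.span (\<Union>k\<in>{0..i}. x k)"

definition pi_sp :: "(nat \<Rightarrow> ('a::field ^ 'n) set) \<Rightarrow> nat \<Rightarrow> ('a ^ 'n) set" where
  "pi_sp x i = vec.span (\<Union>k\<in>{1..i}. x k)"

definition del2 :: "'b list \<Rightarrow> 'b list" where
  "del2 J = butlast (butlast J) @ [last J]"

text \<open>z_{J,Jbar,m}; ordered subsets are lists, l k is the line labelled k.\<close>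
function zpt :: "(nat \<Rightarrow> ('a::field ^ 'n) set) \<Rightarrow> (nat \<Rightarrow> ('a ^ 'n) set) \<Rightarrow>
    (nat \<Rightarrow> ('a ^ 'n) set) \<Rightarrow> ('a ^ 'n) set \<Rightarrow> nat list \<Rightarrow> nat list \<Rightarrow> ('a ^ 'n) set" where
  "zpt x y l m J K =
    (if length J < 2 then l (hd J) \<inter> l (hd K) \<inter> m
     else pjoin (x (length J + 1)) (zpt x y l m (butlast J) (butlast K))
          \<inter> pjoin (y (length J + 1)) (zpt x y l m (del2 J) (del2 K)))"
  by pat_completeness auto
termination
  by (relation "Wellfounded.measure (\<lambda>(x, y, l, m, J, K). length J)") (auto simp: del2_def)

end

theory Submission
  imports Defs
begin

text \<open>The recursion defining zpt reads the two label lists only through the base points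
  l a \<inter> l b \<inter> m, which are symmetric in a and b, and both recursive calls delete the same
  position (the last or the second-to-last) from the two lists. Hence the point depends only
  on the unordered pairs of labels at each position, and the choice hypothesis together with
  disjointness says exactly that the primed lists yield the same pairs.\<close>

lemma length_del2: "length J \<ge> 2 \<Longrightarrow> length (del2 J) = length J - 1"
  by (simp add: del2_def)

lemma nth_del2:
  assumes "length J \<ge> 2" "i < length J - 1"
  shows "del2 J ! i = (if i < length J - 2 then J ! i else J ! (length J - 1))"
  using assms last_conv_nth[of J] by (cases "J = []") (auto simp: del2_def nth_append nth_butlast)

lemma zpt_eq_if_same_pairs:
  assumes "length K = length J" "length J' = length J" "length K' = length J"
    and "\<forall>i < length J. {J ! i, K ! i} = {J' ! i, K' ! i}"
  shows "zpt x y l m J K = zpt x y l m J' K'"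
  using assms
proof (induction "length J" arbitrary: J K J' K' rule: less_induct)
  case less
  show ?case
  proof (cases "length J < 2")
    case True
    show ?thesis
    proof (cases "J = []")
      case True
      then show ?thesis using less.prems by simp
    next
      case False
      then have "length J = 1" using \<open>length J < 2\<close> by (cases J) auto
      then have "{hd J, hd K} = {hd J', hd K'}"
        using less.prems by (simp add: hd_conv_nth flip: length_greater_0_conv)
      then have "l (hd J) \<inter> l (hd K) = l (hd J') \<inter> l (hd K')"
        by (auto simp: doubleton_eq_iff)
      then show ?thesis using True less.prems
        by (simp add: zpt.simps[of _ _ _ _ J] zpt.simps[of _ _ _ _ J'])
    qed
  next
    case False
    have "zpt x y l m (butlast J) (butlast K) = zpt x y l m (butlast J') (butlast K')"
      by (rule less.hyps) (use less.prems False in \<open>auto simp: nth_butlast\<close>)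
    moreover have "zpt x y l m (del2 J) (del2 K) = zpt x y l m (del2 J') (del2 K')"
      by (rule less.hyps) (use less.prems False in \<open>auto simp: length_del2 nth_del2\<close>)
    ultimately show ?thesis using False less.prems
      by (simp add: zpt.simps[of _ _ _ _ J] zpt.simps[of _ _ _ _ J'])
  qed
qed

theorem lemma2p5:
  fixes n N j :: nat
    and x y l :: "nat \<Rightarrow> ('a::field ^ 'n) set"
    and m :: "('a ^ 'n) set"
    and J Jb J' Jb' :: "nat list"
  assumes dimn: "CARD('n) = n + 1" and n2: "n \<ge> 2"
    and gp: "gen_pos n x"
    and y_pt: "\<And>i. 3 \<le> i \<Longrightarrow> i \<le> n \<Longrightarrow>
        ppoint (y i) \<and> y i \<subseteq> pjoin (x (i - 1)) (x i) \<and> y i \<noteq> x (i - 1) \<and> y i \<noteq> x i"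
    and L_lines: "\<And>k. k \<in> {1..N} \<Longrightarrow> pline (l k) \<and> l k \<subseteq> Sigma_sp x 2
        \<and> ppoint (l k \<inter> pi_sp x 2) \<and> l k \<inter> pi_sp x 2 \<noteq> x 2"
    and L_dist: "\<And>k k'. k \<in> {1..N} \<Longrightarrow> k' \<in> {1..N} \<Longrightarrow> k \<noteq> k' \<Longrightarrow>
        l k \<inter> pi_sp x 2 \<noteq> l k' \<inter> pi_sp x 2"
    and m_line: "pline m" "m \<subseteq> Sigma_sp x 2" "x 2 \<subseteq> m" "m \<noteq> pi_sp x 2"
    and j: "1 \<le> j" "j \<le> n - 1"
    and J: "length J = j" "distinct J" "set J \<subseteq> {1..N}"
    and Jb: "length Jb = j" "distinct Jb" "set Jb \<subseteq> {1..N}"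
    and JJb: "set J \<inter> set Jb = {}"
    and meet: "\<And>i. i < j \<Longrightarrow> ppoint (l (J ! i) \<inter> l (Jb ! i) \<inter> m)"
    and J': "length J' = j" "distinct J'" "set J' \<subseteq> {1..N}"
    and Jb': "length Jb' = j" "distinct Jb'" "set Jb' \<subseteq> {1..N}"
    and J'Jb': "set J' \<inter> set Jb' = {}"
    and choice: "\<And>i. i < j \<Longrightarrow> (J' ! i = J ! i \<or> J' ! i = Jb ! i)
                                \<and> (Jb' ! i = J ! i \<or> Jb' ! i = Jb ! i)"
  shows "zpt x y l m J Jb = zpt x y l m J' Jb'"
proof (rule zpt_eq_if_same_pairs)
  show "\<forall>i < length J. {J ! i, Jb ! i} = {J' ! i, Jb' ! i}"
  proof (intro allI impI)
    fix i assume "i < length J"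
    then have i: "i < j" using J(1) by simp
    have "J' ! i \<noteq> Jb' ! i" using J'Jb' J'(1) Jb'(1) i by (metis disjoint_iff nth_mem)
    then show "{J ! i, Jb ! i} = {J' ! i, Jb' ! i}" using choice[OF i] by auto
  qed
qed (use J(1) Jb(1) J'(1) Jb'(1) in simp_all)


end
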